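(* Let an $(n,k)$ binary linear block code encode information words $\boldsymbol{b}=(b_1,\dots,b_k)\in\{0,1\}^k$ into codewords; list all $2^k$ information words as $\boldsymbol{b}^{(1)},\dots,\boldsymbol{b}^{(2^k)}$ and let $\boldsymbol{c}^{(j)}\in\{0,1\}^n$ be the codeword encoding $\boldsymbol{b}^{(j)}$. Consider the three-layer network with $n$ input neurons, $2^k$ hidden neurons and $k$ output neurons, with zero biases, defined as follows: the $n\times 2^k$ binary weight matrix $\boldsymbol{W}_1$ has $j$-th column $\boldsymbol{c}^{(j)}$; the $2^k\times k$ binary weight matrix $\boldsymbol{W}_2$ has $j$-th row $\boldsymbol{b}^{(j)}$; the hidden layer applies the scaled softmax with $\alpha=2/\sigma^2$, i.e. for input $\boldsymbol{r}\in\mathbb{R}^n$ (a row vector) the hidden output is $\boldsymbol{h}$ with $h_j=\exp(\alpha(\boldsymbol{r}\boldsymbol{W}_1)_j)/\sum_{l=1}^{2^k}\exp(\alpha(\boldsymbol{r}\boldsymbol{W}_1)_l)$; and the output layer computes $\boldsymbol{v}=\boldsymbol{h}\boldsymbol{W}_2\in\mathbb{R}^k$. The decoder sets $\hat{b}_i=1$ if $v_i>1/2$ and $\hat{b}_i=0$ if $v_i<1/2$ (either value if $v_i=1/2$). Then this decoder is bit-wise optimal: for every $\boldsymbol{r}$ and every $i=1,\dots,k$, $\hat{b}_i\in\mathrm{argmax}_{\beta\in\{0,1\}}\,p(\boldsymbol{r}\mid b_i=\beta)$. No training is required.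
   Context: Transmission model: information words $\boldsymbol{b}$ are uniformly distributed on $\{0,1\}^k$ (so all codewords are equally likely); the codeword $\boldsymbol{c}$ is mapped by BPSK to $\boldsymbol{s}$ with $s_i=2c_i-1$; the channel is additive white Gaussian noise, $\boldsymbol{r}=\boldsymbol{s}+\boldsymbol{w}$ with $w_1,\dots,w_n$ i.i.d. $\mathcal{N}(0,\sigma^2)$, so $p(\boldsymbol{r}\mid\boldsymbol{s})=\prod_{i=1}^n (2\pi\sigma^2)^{-1/2}\exp(-(r_i-s_i)^2/(2\sigma^2))$, and $p(\boldsymbol{r}\mid b_i=\beta)$ is the conditional density of $\boldsymbol{r}$ given that the $i$-th information bit equals $\beta$. A decoder is bit-wise optimal if each estimated bit $\hat{b}_i$ maximizes $p(\boldsymbol{r}\mid b_i=\beta)$ over $\beta\in\{0,1\}$ (this minimizes the bit error rate). *)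

theory Defs
  imports Complex_Main
begin

(* Bits are booleans (True = 1, False = 0). Information words are bool lists of
   length k, codewords bool lists of length n; indices are 0-based. *)

definition info_words :: "nat \<Rightarrow> bool list set" where
  "info_words k = {b. length b = k}"

(* (n,k) binary linear block code given by its encoder: GF(2)-linear map from
   {0,1}^k to {0,1}^n (xor is \<noteq> on bool). *)
definition binary_linear_code :: "nat \<Rightarrow> nat \<Rightarrow> (bool list \<Rightarrow> bool list) \<Rightarrow> bool" where
  "binary_linear_code n k enc \<longleftrightarrow>
     (\<forall>b \<in> info_words k. length (enc b) = n) \<and>
     (\<forall>b \<in> info_words k. \<forall>b' \<in> info_words k.
        enc (map2 (\<noteq>) b b') = map2 (\<noteq>) (enc (b)) (enc b'))"

definition bpsk :: "bool list \<Rightarrow> nat \<Rightarrow> real" where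
  "bpsk c i = 2 * of_bool (c ! i) - 1"

definition awgn_density :: "nat \<Rightarrow> real \<Rightarrow> (nat \<Rightarrow> real) \<Rightarrow> (nat \<Rightarrow> real) \<Rightarrow> real" where
  "awgn_density n \<sigma> r s =
     (\<Prod>l<n. (1 / sqrt (2 * pi * \<sigma>\<^sup>2)) * exp (- (r l - s l)\<^sup>2 / (2 * \<sigma>\<^sup>2)))"

(* p(r | b_i = beta) with b uniform on {0,1}^k:
   average of p(r | s(enc b)) over the information words b with b_i = beta *)
definition bit_likelihood ::
  "nat \<Rightarrow> nat \<Rightarrow> (bool list \<Rightarrow> bool list) \<Rightarrow> real \<Rightarrow> (nat \<Rightarrow> real) \<Rightarrow> nat \<Rightarrow> bool \<Rightarrow> real" where
  "bit_likelihood n k enc \<sigma> r i \<beta> =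
     (\<Sum>b \<in> {b \<in> info_words k. b ! i = \<beta>}. awgn_density n \<sigma> r (bpsk (enc b)))
       / real (card {b \<in> info_words k. b ! i = \<beta>})"

(* Weight matrices; bw enumerates the information words b^(j), j < 2^k *)
definition W1 :: "(bool list \<Rightarrow> bool list) \<Rightarrow> (nat \<Rightarrow> bool list) \<Rightarrow> nat \<Rightarrow> nat \<Rightarrow> real" where
  "W1 enc bw l j = of_bool (enc (bw j) ! l)"

definition W2 :: "(nat \<Rightarrow> bool list) \<Rightarrow> nat \<Rightarrow> nat \<Rightarrow> real" where
  "W2 bw j i = of_bool (bw j ! i)"

definition hidden_out ::
  "nat \<Rightarrow> nat \<Rightarrow> (bool list \<Rightarrow> bool list) \<Rightarrow> (nat \<Rightarrow> bool list) \<Rightarrow> real \<Rightarrow> (nat \<Rightarrow> real) \<Rightarrow> nat \<Rightarrow> real" where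
  "hidden_out n k enc bw \<sigma> r j =
     (let \<alpha> = 2 / \<sigma>\<^sup>2; z = (\<lambda>j. \<Sum>l<n. r l * W1 enc bw l j) in
      exp (\<alpha> * z j) / (\<Sum>m<2^k. exp (\<alpha> * z m)))"

definition net_out ::
  "nat \<Rightarrow> nat \<Rightarrow> (bool list \<Rightarrow> bool list) \<Rightarrow> (nat \<Rightarrow> bool list) \<Rightarrow> real \<Rightarrow> (nat \<Rightarrow> real) \<Rightarrow> nat \<Rightarrow> real" where
  "net_out n k enc bw \<sigma> r i = (\<Sum>j<2^k. hidden_out n k enc bw \<sigma> r j * W2 bw j i)"

end

theory Submission
  imports Defs
begin

text \<open>With BPSK, \<open>-(r\<^sub>l - s\<^sub>l)\<^sup>2/(2\<sigma>\<^sup>2)\<close> equals \<open>2 r\<^sub>l c\<^sub>l/\<sigma>\<^sup>2\<close> plus a term not depending on the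
  codeword \<open>c\<close>, so \<open>p(r | c)\<close> is proportional to \<open>exp (2/\<sigma>\<^sup>2 \<cdot> r\<cdot>c)\<close>, which is exactly the unnormalised
  softmax activation of the hidden neuron of \<open>c\<close>. Hence the hidden layer outputs the posterior
  probabilities of the information words and \<open>v\<^sub>i\<close> is the posterior probability that \<open>b\<^sub>i = 1\<close>.
  Since exactly half of the information words have \<open>b\<^sub>i = 1\<close>, comparing \<open>v\<^sub>i\<close> with \<open>1/2\<close> compares
  the two bit likelihoods \<open>p(r | b\<^sub>i = \<beta>)\<close>.\<close>

lemma finite_info_words: "finite (info_words k)"
  unfolding info_words_def using finite_lists_length_eq[of "UNIV :: bool set" k] by simp

lemma card_info_words_nth_True_eq_False:
  assumes "i < k"
  shows "card {b \<in> info_words k. b ! i = True} = card {b \<in> info_words k. b ! i = False}"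
proof -
  have "bij_betw (\<lambda>b. b[i := False])
      {b \<in> info_words k. b ! i = True} {b \<in> info_words k. b ! i = False}"
    by (rule bij_betw_byWitness[where f' = "\<lambda>b. b[i := True]"])
      (use assms in \<open>auto simp: info_words_def list_update_same_conv
                        intro!: image_eqI[where x = "_[i := True]"]\<close>)
  then show ?thesis
    by (rule bij_betw_same_card)
qed

lemma info_words_nth_nonempty:
  assumes "i < k"
  shows "{b \<in> info_words k. b ! i = \<beta>} \<noteq> {}"
  using assms by (auto simp: info_words_def intro!: exI[of _ "replicate k \<beta>"])

definition corr_weight :: "nat \<Rightarrow> real \<Rightarrow> (nat \<Rightarrow> real) \<Rightarrow> bool list \<Rightarrow> real" where
  "corr_weight n \<sigma> r c = exp ((2 / \<sigma>\<^sup>2) * (\<Sum>l<n. r l * of_bool (c ! l)))"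

definition bit_weight ::
  "nat \<Rightarrow> nat \<Rightarrow> (bool list \<Rightarrow> bool list) \<Rightarrow> real \<Rightarrow> (nat \<Rightarrow> real) \<Rightarrow> nat \<Rightarrow> bool \<Rightarrow> real" where
  "bit_weight n k enc \<sigma> r i \<beta> =
     (\<Sum>b \<in> {b \<in> info_words k. b ! i = \<beta>}. corr_weight n \<sigma> r (enc b))"

lemma bit_weight_pos:
  assumes "i < k"
  shows "0 < bit_weight n k enc \<sigma> r i \<beta>"
  unfolding bit_weight_def corr_weight_def
  using info_words_nth_nonempty[OF assms] finite_info_words[of k] by (intro sum_pos) auto

lemma awgn_density_bpsk_proportional:
  assumes "\<sigma> > 0"
  obtains K where "K > 0" and "\<And>c. awgn_density n \<sigma> r (bpsk c) = K * corr_weight n \<sigma> r c"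
proof
  define g where "g l = 1 / sqrt (2 * pi * \<sigma>\<^sup>2) * exp (- (r l ^ 2 + 1) / (2 * \<sigma>\<^sup>2) - r l / \<sigma>\<^sup>2)"
    for l
  show "(\<Prod>l<n. g l) > 0"
    unfolding g_def using assms by (intro prod_pos) auto
  fix c
  have factor: "1 / sqrt (2 * pi * \<sigma>\<^sup>2) * exp (- (r l - bpsk c l)\<^sup>2 / (2 * \<sigma>\<^sup>2))
      = g l * exp ((2 / \<sigma>\<^sup>2) * (r l * of_bool (c ! l)))" for l
  proof -
    have "- (r l - bpsk c l)\<^sup>2 / (2 * \<sigma>\<^sup>2)
        = (- (r l ^ 2 + 1) / (2 * \<sigma>\<^sup>2) - r l / \<sigma>\<^sup>2) + (2 / \<sigma>\<^sup>2) * (r l * of_bool (c ! l))"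
      using assms by (cases "c ! l") (auto simp: bpsk_def field_simps power2_eq_square)
    then show ?thesis
      by (simp add: g_def exp_add)
  qed
  have "corr_weight n \<sigma> r c = (\<Prod>l<n. exp ((2 / \<sigma>\<^sup>2) * (r l * of_bool (c ! l))))"
    unfolding corr_weight_def sum_distrib_left by (rule exp_sum) simp
  then show "awgn_density n \<sigma> r (bpsk c) = (\<Prod>l<n. g l) * corr_weight n \<sigma> r c"
    unfolding awgn_density_def factor prod.distrib by simp
qed

lemma bit_likelihood_proportional:
  assumes "\<sigma> > 0" and "i < k"
  obtains C where "C > 0"
    and "\<And>\<beta>. bit_likelihood n k enc \<sigma> r i \<beta> = C * bit_weight n k enc \<sigma> r i \<beta>"
proof -
  obtain K where "K > 0" and K: "\<And>c. awgn_density n \<sigma> r (bpsk c) = K * corr_weight n \<sigma> r c"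
    using awgn_density_bpsk_proportional[OF assms(1)] by blast
  define N where "N = real (card {b \<in> info_words k. b ! i = True})"
  have card_eq: "real (card {b \<in> info_words k. b ! i = \<beta>}) = N" for \<beta>
    unfolding N_def using card_info_words_nth_True_eq_False[OF assms(2)] by (cases \<beta>) auto
  have "N > 0"
    unfolding N_def using info_words_nth_nonempty[OF assms(2), of True] finite_info_words[of k]
    by (simp add: card_gt_0_iff)
  show ?thesis
  proof
    show "K / N > 0"
      using \<open>K > 0\<close> \<open>N > 0\<close> by simp
    show "bit_likelihood n k enc \<sigma> r i \<beta> = K / N * bit_weight n k enc \<sigma> r i \<beta>" for \<beta>
      unfolding bit_likelihood_def bit_weight_def card_eq K
      by (simp add: sum_distrib_left sum_divide_distrib)
  qed
qed

lemma net_out_eq_bit_weight: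
  assumes "bij_betw bw {..<2^k} (info_words k)"
  shows "net_out n k enc bw \<sigma> r i =
    bit_weight n k enc \<sigma> r i True / (bit_weight n k enc \<sigma> r i True + bit_weight n k enc \<sigma> r i False)"
proof -
  let ?w = "\<lambda>b. corr_weight n \<sigma> r (enc b)"
  have reindex: "(\<Sum>j<2^k. f (bw j)) = (\<Sum>b\<in>info_words k. f b)" for f :: "bool list \<Rightarrow> real"
    using sum.reindex_bij_betw[OF assms, of f] by simp
  have total: "(\<Sum>b\<in>info_words k. ?w b)
      = bit_weight n k enc \<sigma> r i True + bit_weight n k enc \<sigma> r i False"
  proof -
    have "info_words k = {b \<in> info_words k. b ! i = True} \<union> {b \<in> info_words k. b ! i = False}"
      by auto
    then show ?thesis
      unfolding bit_weight_def using finite_info_words[of k]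
      by (simp add: sum.union_disjoint[symmetric] disjoint_iff)
  qed
  have ones: "(\<Sum>b\<in>info_words k. ?w b * of_bool (b ! i)) = bit_weight n k enc \<sigma> r i True"
    unfolding bit_weight_def using finite_info_words[of k]
    by (simp add: sum.inter_filter[symmetric] Int_def)
  have hidden: "hidden_out n k enc bw \<sigma> r j = ?w (bw j) / (\<Sum>b\<in>info_words k. ?w b)" for j
    unfolding hidden_out_def Let_def W1_def using reindex[of ?w] by (simp add: corr_weight_def)
  have "net_out n k enc bw \<sigma> r i
      = (\<Sum>j<2^k. ?w (bw j) * of_bool (bw j ! i)) / (\<Sum>b\<in>info_words k. ?w b)"
    unfolding net_out_def hidden W2_def sum_divide_distrib by simp
  also have "\<dots> = bit_weight n k enc \<sigma> r i True
      / (bit_weight n k enc \<sigma> r i True + bit_weight n k enc \<sigma> r i False)"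
    using reindex[of "\<lambda>b. ?w b * of_bool (b ! i)"] ones total by simp
  finally show ?thesis .
qed

lemma threshold_decision_maximizes:
  fixes S :: "bool \<Rightarrow> real"
  assumes "\<And>\<beta>. S \<beta> > 0"
    and "S True / (S True + S False) > 1/2 \<Longrightarrow> bhat"
    and "S True / (S True + S False) < 1/2 \<Longrightarrow> \<not> bhat"
  shows "S \<beta> \<le> S bhat"
proof -
  have "S True / (S True + S False) > 1/2 \<longleftrightarrow> S True > S False"
    and "S True / (S True + S False) < 1/2 \<longleftrightarrow> S True < S False"
    using assms(1)[of True] assms(1)[of False] by (simp_all add: field_simps)
  then show ?thesis
    using assms(2,3) by (cases \<beta>; cases bhat) auto
qed

theorem theorem2:
  fixes n k :: nat and enc :: "bool list \<Rightarrow> bool list" and bw :: "nat \<Rightarrow> bool list"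
    and \<sigma> :: real and r :: "nat \<Rightarrow> real" and i :: nat and bhat :: bool
  assumes "binary_linear_code n k enc"
    and "bij_betw bw {..<2^k} (info_words k)"
    and "\<sigma> > 0"
    and "i < k"
    and "net_out n k enc bw \<sigma> r i > 1/2 \<Longrightarrow> bhat"
    and "net_out n k enc bw \<sigma> r i < 1/2 \<Longrightarrow> \<not> bhat"
  shows "\<forall>\<beta>::bool. bit_likelihood n k enc \<sigma> r i \<beta> \<le> bit_likelihood n k enc \<sigma> r i bhat"
proof
  fix \<beta>
  obtain C where "C > 0"
    and C: "\<And>\<beta>. bit_likelihood n k enc \<sigma> r i \<beta> = C * bit_weight n k enc \<sigma> r i \<beta>"
    using bit_likelihood_proportional[OF assms(3,4)] by blast
  from assms(5,6) have "bit_weight n k enc \<sigma> r i \<beta> \<le> bit_weight n k enc \<sigma> r i bhat"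
    unfolding net_out_eq_bit_weight[OF assms(2)]
    by (rule threshold_decision_maximizes[OF bit_weight_pos[OF assms(4)]])
  then show "bit_likelihood n k enc \<sigma> r i \<beta> \<le> bit_likelihood n k enc \<sigma> r i bhat"
    unfolding C using \<open>C > 0\<close> by simp
qed

end
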